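(* Let $\mathcal{F},G:\mathbb{R}^p\times\mathbb{R}^q\to\mathbb{R}$ satisfy the standing assumptions (A1) and (A2) with constants $L>0$ and $M<\infty$, and fix $\delta>0$ and $\xi\in(0,1)$. Suppose the learning-rate sequences $(\eta_w^{(t)})_{t\ge1}$, $(\eta_\alpha^{(t)})_{t\ge1}$ are positive and satisfy $$\sum_{t=1}^\infty\eta_\alpha^{(t)}<\infty,\qquad \sum_{t=1}^\infty\eta_w^{(t)}=\infty,\qquad \sum_{t=1}^\infty\big(\eta_w^{(t)}\big)^2<\infty,$$ $$\eta_\alpha^{(t)}<\eta_w^{(t)}<\min\Big(\frac{1-\xi}{L},1\Big)\quad\text{for all }t\ge1.$$ Let $(w^t,\alpha^t)_{t\ge1}$ be generated by the EBOMLC iteration from an arbitrary initial point. Then $$\lim_{t\to\infty}\big\|\nabla_w\mathcal{F}(w^t,\alpha^t)\big\|=0.$$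
   Context: Notation: $\|\cdot\|$ is the Euclidean norm; for a function $\Phi(w,\alpha)$ of $(w,\alpha)\in\mathbb{R}^p\times\mathbb{R}^q$, $\nabla\Phi=(\nabla_w\Phi,\nabla_\alpha\Phi)$ denotes the full gradient in the joint variable. Standing assumptions. (A1) $\mathcal{F}$ and $G$ are differentiable on $\mathbb{R}^p\times\mathbb{R}^q$ and $\nabla\mathcal{F}$, $\nabla G$ are $L$-Lipschitz with respect to the joint variable $(w,\alpha)$, for some $L>0$. (A2) There is a finite $M$ such that for all $(w,\alpha)$: $|\mathcal{F}(w,\alpha)|\le M$, $|G(w,\alpha)|\le M$, $\|\nabla\mathcal{F}(w,\alpha)\|\le M$, $\|\nabla G(w,\alpha)\|\le M$. EBOMLC iteration. Fix constants $\delta>0$, $\xi\in(0,1)$ and positive learning rates $\eta_w^{(t)},\eta_\alpha^{(t)}$. Given $(w^t,\alpha^t)$, set $w^t_{(1)}=w^t-\eta_w^{(t)}\nabla_wG(w^t,\alpha^t)$ and define $\mathcal{Q}_t(w,\alpha)=G(w,\alpha)-G(w^t_{(1)},\alpha)$, where $w^t_{(1)}$ is treated as a constant when differentiating, so that $$\nabla\mathcal{Q}(w^t,\alpha^t):=\nabla G(w^t,\alpha^t)-\nabla G(w^t_{(1)},\alpha^t),$$ with components $\nabla_w\mathcal{Q},\nabla_\alpha\mathcal{Q}$. Define $$\bar\beta_t=\max\Big(\delta-\frac{\nabla_w\mathcal{F}(w^t,\alpha^t)^T\nabla_w\mathcal{Q}(w^t,\alpha^t)}{\|\nabla\mathcal{Q}(w^t,\alpha^t)\|^2},\,0\Big)$$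 if $\nabla\mathcal{Q}(w^t,\alpha^t)\neq0$, and $\bar\beta_t=0$ otherwise. Then update $$w^{t+1}=w^t-\eta_w^{(t)}\big(\nabla_w\mathcal{F}(w^t,\alpha^t)+\xi\bar\beta_t\nabla_w\mathcal{Q}(w^t,\alpha^t)\big),$$ $$\alpha^{t+1}=\alpha^t-\eta_\alpha^{(t)}\big(\nabla_\alpha\mathcal{F}(w^t,\alpha^t)+\xi\bar\beta_t\nabla_\alpha\mathcal{Q}(w^t,\alpha^t)\big).$$ *)

theory Defs
  imports "HOL-Analysis.Analysis"
begin

text \<open>Joint variable (w, alpha) lives in the product type 'w \<times> 'a (Euclidean norm on the product).\<close>

definition has_gradient_everywhere ::
  "(('w::euclidean_space) \<times> ('a::euclidean_space) \<Rightarrow> real) \<Rightarrow> ('w \<times> 'a \<Rightarrow> 'w \<times> 'a) \<Rightarrow> bool" where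
  "has_gradient_everywhere f gf \<longleftrightarrow> (\<forall>x. (f has_derivative (\<lambda>h. gf x \<bullet> h)) (at x))"

text \<open>Gradient of Q_t at (w^t, alpha^t): grad G (w,alpha) - grad G (w_(1), alpha),
  with w_(1) = w - eta_w * grad_w G (w,alpha).\<close>
definition gradQ ::
  "('w::euclidean_space \<times> 'a::euclidean_space \<Rightarrow> 'w \<times> 'a) \<Rightarrow> real \<Rightarrow> 'w \<times> 'a \<Rightarrow> 'w \<times> 'a" where
  "gradQ gG eta_w x = gG x - gG (fst x - eta_w *\<^sub>R fst (gG x), snd x)"

definition beta_bar ::
  "real \<Rightarrow> ('w::euclidean_space \<times> 'a::euclidean_space \<Rightarrow> 'w \<times> 'a) \<Rightarrow> ('w \<times> 'a \<Rightarrow> 'w \<times> 'a)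
    \<Rightarrow> real \<Rightarrow> 'w \<times> 'a \<Rightarrow> real" where
  "beta_bar \<delta> gF gG eta_w x =
     (let q = gradQ gG eta_w x in
      if q = 0 then 0
      else max (\<delta> - (fst (gF x) \<bullet> fst q) / (norm q)\<^sup>2) 0)"

definition ebomlc_step ::
  "real \<Rightarrow> real \<Rightarrow> ('w::euclidean_space \<times> 'a::euclidean_space \<Rightarrow> 'w \<times> 'a) \<Rightarrow> ('w \<times> 'a \<Rightarrow> 'w \<times> 'a)
    \<Rightarrow> real \<Rightarrow> real \<Rightarrow> 'w \<times> 'a \<Rightarrow> 'w \<times> 'a" where
  "ebomlc_step \<delta> \<xi> gF gG eta_w eta_a x =
     (let q = gradQ gG eta_w x; b = beta_bar \<delta> gF gG eta_w x in
      (fst x - eta_w *\<^sub>R (fst (gF x) + (\<xi> * b) *\<^sub>R fst q),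
       snd x - eta_a *\<^sub>R (snd (gF x) + (\<xi> * b) *\<^sub>R snd q)))"

end

theory Submission
  imports Defs
begin

text \<open>
  The EBOMLC direction is the gradient of \<open>\<F>\<close> plus the correction \<open>\<xi> \<beta>\<^sub>t \<nabla>\<Q>\<close>. The
  correction is small, \<open>\<parallel>\<nabla>\<Q>\<parallel> \<le> L \<eta>\<^sub>w M\<close>, and the choice of \<open>\<beta>\<^sub>t\<close> keeps
  \<open>\<langle>\<nabla>\<^sub>w\<F>, \<nabla>\<^sub>w\<F> + \<xi> \<beta>\<^sub>t \<nabla>\<^sub>w\<Q>\<rangle> \<ge> (1 - \<xi>) \<parallel>\<nabla>\<^sub>w\<F>\<parallel>\<^sup>2 - \<delta> \<parallel>\<nabla>\<^sub>w\<F>\<parallel> \<parallel>\<nabla>\<Q>\<parallel>\<close>.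
  With the descent lemma for the \<open>L\<close>-smooth \<open>\<F>\<close> this gives
  \<open>\<F>(x\<^sup>t\<^sup>+\<^sup>1) \<le> \<F>(x\<^sup>t) - (1 - \<xi>) \<eta>\<^sub>w \<parallel>\<nabla>\<^sub>w\<F>(x\<^sup>t)\<parallel>\<^sup>2 + C (\<eta>\<^sub>w\<^sup>2 + \<eta>\<^sub>\<alpha>)\<close>, and as \<open>\<F>\<close> is
  bounded, \<open>\<Sum> \<eta>\<^sub>w u\<^sub>t\<^sup>2 < \<infinity>\<close> for \<open>u\<^sub>t = \<parallel>\<nabla>\<^sub>w\<F>(x\<^sup>t)\<parallel>\<close>. Since \<open>|u\<^sub>t\<^sub>+\<^sub>1 - u\<^sub>t| \<le> C \<eta>\<^sub>w\<close>,
  the increments of \<open>u\<^sub>t\<^sup>3\<close> are \<open>O(\<eta>\<^sub>w u\<^sub>t\<^sup>2 + \<eta>\<^sub>w\<^sup>3)\<close>, hence summable, so \<open>u\<^sub>t\<close>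
  converges; a positive limit would force \<open>\<Sum> \<eta>\<^sub>w < \<infinity>\<close>.
\<close>

lemma descent_lemma:
  fixes f :: "'v::real_inner \<Rightarrow> real"
  assumes deriv: "\<And>z. (f has_derivative (\<lambda>h. f' z \<bullet> h)) (at z)"
    and lip: "\<And>u v. norm (f' u - f' v) \<le> L * norm (u - v)"
  shows "f y \<le> f x + f' x \<bullet> (y - x) + L * (norm (y - x))\<^sup>2"
proof -
  define h where "h = y - x"
  have "((\<lambda>s. f (x + s *\<^sub>R h)) has_real_derivative f' (x + s *\<^sub>R h) \<bullet> h) (at s)" for s
  proof -
    have "((\<lambda>s. f (x + s *\<^sub>R h)) has_derivative (\<lambda>t. f' (x + s *\<^sub>R h) \<bullet> (t *\<^sub>R h))) (at s)"
      by (rule has_derivative_compose[OF _ deriv]) (auto intro!: derivative_eq_intros)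
    then show ?thesis
      by (simp add: has_field_derivative_def mult_commute_abs)
  qed
  then obtain z where z: "0 < z" "z < 1" and mvt: "f (x + h) - f x = f' (x + z *\<^sub>R h) \<bullet> h"
    using MVT2[of 0 1 "\<lambda>s. f (x + s *\<^sub>R h)" "\<lambda>s. f' (x + s *\<^sub>R h) \<bullet> h"] by auto
  have "0 \<le> L * norm h"
    using order_trans[OF norm_ge_zero lip[of "x + h" x]] by simp
  have "(f' (x + z *\<^sub>R h) - f' x) \<bullet> h \<le> norm (f' (x + z *\<^sub>R h) - f' x) * norm h"
    by (rule norm_cauchy_schwarz)
  also have "\<dots> \<le> L * (z * norm h) * norm h"
    using lip[of "x + z *\<^sub>R h" x] z by (intro mult_right_mono) auto
  also have "\<dots> = z * (L * norm h * norm h)"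
    by (simp add: algebra_simps)
  also have "\<dots> \<le> L * norm h * norm h"
    using \<open>0 \<le> L * norm h\<close> z by (intro mult_left_le_one_le) auto
  finally show ?thesis
    using mvt by (simp add: h_def inner_diff_left power2_eq_square)
qed

lemma abs_cube_diff_le:
  fixes v w h :: real
  assumes "\<bar>w - v\<bar> \<le> h"
  shows "\<bar>w ^ 3 - v ^ 3\<bar> \<le> h * (6 * v\<^sup>2 + 6 * h\<^sup>2)"
proof -
  have "4 * (w\<^sup>2 + w * v + v\<^sup>2) = (2 * w + v)\<^sup>2 + 3 * v\<^sup>2"
    by (simp add: algebra_simps power2_eq_square)
  then have nonneg: "0 \<le> w\<^sup>2 + w * v + v\<^sup>2"
    by (smt (verit) zero_le_power2)
  have "(w - v)\<^sup>2 \<le> h\<^sup>2"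
    using assms by (metis abs_ge_zero power2_abs power_mono)
  moreover have "w\<^sup>2 \<le> 2 * v\<^sup>2 + 2 * (w - v)\<^sup>2"
    using zero_le_power2[of "w - 2 * v"] by (simp add: algebra_simps power2_eq_square)
  ultimately have "w\<^sup>2 \<le> 2 * v\<^sup>2 + 2 * h\<^sup>2"
    by linarith
  moreover have "2 * (w * v) \<le> w\<^sup>2 + v\<^sup>2"
    using zero_le_power2[of "w - v"] by (simp add: algebra_simps power2_eq_square)
  ultimately have "w\<^sup>2 + w * v + v\<^sup>2 \<le> 6 * v\<^sup>2 + 6 * h\<^sup>2"
    using zero_le_power2[of h] zero_le_power2[of v] by linarith
  moreover have "w ^ 3 - v ^ 3 = (w - v) * (w\<^sup>2 + w * v + v\<^sup>2)"
    by (simp add: algebra_simps power2_eq_square power3_eq_cube)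
  ultimately show ?thesis
    using assms nonneg by (simp add: abs_mult mult_mono)
qed

lemma summable_of_descent:
  fixes f c r :: "nat \<Rightarrow> real"
  assumes c_nonneg: "\<And>n. 0 \<le> c n"
    and descent: "\<And>n. f (Suc n) \<le> f n - c n + r n"
    and r_nonneg: "\<And>n. 0 \<le> r n" and "summable r"
    and bounded_below: "\<And>n. B \<le> f n"
  shows "summable c"
proof (rule summableI_nonneg_bounded[OF c_nonneg])
  fix N
  have "(\<Sum>n<N. c n) \<le> (\<Sum>n<N. f n - f (Suc n) + r n)"
    using descent by (intro sum_mono) (simp add: algebra_simps)
  also have "\<dots> = f 0 - f N + (\<Sum>n<N. r n)"
    by (simp add: sum.distrib sum_lessThan_telescope')
  also have "\<dots> \<le> f 0 - B + suminf r"
    using bounded_below[of N] sum_le_suminf[OF \<open>summable r\<close>, of "{..<N}"] r_nonneg by auto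
  finally show "(\<Sum>n<N. c n) \<le> f 0 - B + suminf r" .
qed

lemma LIMSEQ_zero_of_summable_weighted_square:
  fixes u e :: "nat \<Rightarrow> real"
  assumes e_nonneg: "\<And>n. 0 \<le> e n"
    and not_summable: "\<not> summable e"
    and summable_e2: "summable (\<lambda>n. (e n)\<^sup>2)"
    and summable_eu2: "summable (\<lambda>n. e n * (u n)\<^sup>2)"
    and increment: "\<And>n. \<bar>u (Suc n) - u n\<bar> \<le> K * e n"
  shows "u \<longlonglongrightarrow> 0"
proof -
  have "summable (\<lambda>n. (e n) ^ 3)"
  proof (rule summable_comparison_test_ev[OF _ summable_e2])
    have "eventually (\<lambda>n. (e n)\<^sup>2 < 1) sequentially"
      using summable_LIMSEQ_zero[OF summable_e2] by (rule order_tendstoD) simp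
    then show "eventually (\<lambda>n. norm ((e n) ^ 3) \<le> (e n)\<^sup>2) sequentially"
      by eventually_elim (simp add: e_nonneg abs_square_less_1 power_decreasing)
  qed
  define d where "d n = u (Suc n) ^ 3 - u n ^ 3" for n
  have bound: "norm (d n) \<le> 6 * K * (e n * (u n)\<^sup>2) + 6 * K ^ 3 * (e n) ^ 3" for n
    using abs_cube_diff_le[OF increment[of n]] unfolding d_def
    by (simp add: algebra_simps power2_eq_square power3_eq_cube)
  have "summable (\<lambda>n. 6 * K * (e n * (u n)\<^sup>2) + 6 * K ^ 3 * (e n) ^ 3)"
    using summable_eu2 \<open>summable (\<lambda>n. (e n) ^ 3)\<close> by (intro summable_add summable_mult)
  then have "summable d"
    by (rule summable_comparison_test') (rule bound)
  then have "(\<lambda>n. u 0 ^ 3 + (\<Sum>k<n. d k)) \<longlonglongrightarrow> u 0 ^ 3 + suminf d"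
    by (intro tendsto_add tendsto_const summable_LIMSEQ)
  then have "(\<lambda>n. u n ^ 3) \<longlonglongrightarrow> u 0 ^ 3 + suminf d"
    using sum_lessThan_telescope[of "\<lambda>k. u k ^ 3"] by (simp add: d_def)
  then have "(\<lambda>n. root 3 (u n ^ 3)) \<longlonglongrightarrow> root 3 (u 0 ^ 3 + suminf d)"
    by (rule tendsto_real_root)
  then obtain v where u_lim: "u \<longlonglongrightarrow> v"
    by (auto simp: odd_real_root_power_cancel)
  have "v = 0"
  proof (rule ccontr)
    assume "v \<noteq> 0"
    then have "0 < v\<^sup>2 / 2" by simp
    moreover have "(\<lambda>n. (u n)\<^sup>2) \<longlonglongrightarrow> v\<^sup>2"
      using u_lim by (intro tendsto_power)
    ultimately have "eventually (\<lambda>n. v\<^sup>2 / 2 < (u n)\<^sup>2) sequentially"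
      by (intro order_tendstoD) (use \<open>v \<noteq> 0\<close> in auto)
    then have "eventually (\<lambda>n. norm (e n) \<le> 2 / v\<^sup>2 * (e n * (u n)\<^sup>2)) sequentially"
    proof eventually_elim
      fix n
      assume "v\<^sup>2 / 2 < (u n)\<^sup>2"
      then have "1 \<le> 2 / v\<^sup>2 * (u n)\<^sup>2"
        using \<open>v \<noteq> 0\<close> by (simp add: field_simps)
      from mult_left_mono[OF this e_nonneg[of n]] show "norm (e n) \<le> 2 / v\<^sup>2 * (e n * (u n)\<^sup>2)"
        using e_nonneg[of n] by (simp add: ac_simps)
    qed
    then have "summable e"
      by (rule summable_comparison_test_ev) (use summable_eu2 in simp)
    with not_summable show False ..
  qed
  with u_lim show ?thesis by simp
qed

lemma beta_bar_nonneg: "0 \<le> beta_bar \<delta> gF gG e p"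
  by (simp add: beta_bar_def Let_def)

lemma beta_bar_nonzeroD:
  assumes "beta_bar \<delta> gF gG e p \<noteq> 0"
  shows "gradQ gG e p \<noteq> 0"
    and "beta_bar \<delta> gF gG e p = \<delta> - fst (gF p) \<bullet> fst (gradQ gG e p) / (norm (gradQ gG e p))\<^sup>2"
  using assms by (auto simp: beta_bar_def Let_def max_def split: if_splits)

lemma abs_inner_fst_le: "\<bar>g \<bullet> fst q\<bar> \<le> norm g * norm q"
  by (metis Cauchy_Schwarz_ineq2 norm_fst_le prod.collapse mult_left_mono norm_ge_zero order_trans)

lemma beta_bar_mult_norm_gradQ_le:
  assumes "0 \<le> \<delta>"
  shows "beta_bar \<delta> gF gG e p * norm (gradQ gG e p) \<le> \<delta> * norm (gradQ gG e p) + norm (fst (gF p))"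
proof (cases "beta_bar \<delta> gF gG e p = 0")
  case True
  with assms show ?thesis by simp
next
  case False
  let ?q = "gradQ gG e p" and ?g = "fst (gF p)"
  have "0 < norm ?q" using beta_bar_nonzeroD(1)[OF False] by simp
  have "beta_bar \<delta> gF gG e p * norm ?q = \<delta> * norm ?q - ?g \<bullet> fst ?q / norm ?q"
    using beta_bar_nonzeroD(2)[OF False] \<open>0 < norm ?q\<close> by (simp add: field_simps power2_eq_square)
  also have "- (?g \<bullet> fst ?q) / norm ?q \<le> norm ?g"
    using abs_inner_fst_le[of ?g ?q] \<open>0 < norm ?q\<close> by (simp add: field_simps abs_le_iff)
  then have "\<delta> * norm ?q - ?g \<bullet> fst ?q / norm ?q \<le> \<delta> * norm ?q + norm ?g"
    by simp
  finally show ?thesis .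
qed

lemma inner_fst_direction_ge:
  assumes "0 \<le> \<delta>" "0 \<le> \<xi>" "\<xi> \<le> 1"
  shows "(1 - \<xi>) * (norm (fst (gF p)))\<^sup>2 - \<delta> * norm (fst (gF p)) * norm (gradQ gG e p)
    \<le> fst (gF p) \<bullet> (fst (gF p) + (\<xi> * beta_bar \<delta> gF gG e p) *\<^sub>R fst (gradQ gG e p))"
proof (cases "beta_bar \<delta> gF gG e p = 0")
  case True
  with assms show ?thesis by (simp add: power2_norm_eq_inner algebra_simps)
next
  case False
  let ?q = "gradQ gG e p" and ?g = "fst (gF p)"
  define c where "c = ?g \<bullet> fst ?q"
  have "0 < norm ?q" using beta_bar_nonzeroD(1)[OF False] by simp
  have c_bound: "\<bar>c\<bar> \<le> norm ?g * norm ?q"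
    unfolding c_def by (rule abs_inner_fst_le)
  then have "c\<^sup>2 \<le> (norm ?g * norm ?q)\<^sup>2"
    by (metis abs_ge_zero power2_abs power_mono)
  then have "c\<^sup>2 / (norm ?q)\<^sup>2 \<le> (norm ?g)\<^sup>2"
    using \<open>0 < norm ?q\<close> by (simp add: divide_le_eq power_mult_distrib)
  have "\<xi> * (c\<^sup>2 / (norm ?q)\<^sup>2) \<le> \<xi> * (norm ?g)\<^sup>2"
    using \<open>c\<^sup>2 / (norm ?q)\<^sup>2 \<le> (norm ?g)\<^sup>2\<close> assms by (intro mult_left_mono) auto
  moreover have "- (\<delta> * norm ?g * norm ?q) \<le> \<xi> * (\<delta> * c)"
  proof -
    have "\<xi> * \<bar>c\<bar> \<le> \<bar>c\<bar>"
      using assms by (intro mult_left_le_one_le) auto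
    moreover have "- (\<xi> * \<bar>c\<bar>) \<le> \<xi> * c"
      using assms abs_ge_minus_self[of "\<xi> * c"] by (simp add: abs_mult)
    ultimately have "- (norm ?g * norm ?q) \<le> \<xi> * c"
      using c_bound by linarith
    from mult_left_mono[OF this \<open>0 \<le> \<delta>\<close>] show ?thesis
      by (simp add: algebra_simps)
  qed
  ultimately have "(1 - \<xi>) * (norm ?g)\<^sup>2 - \<delta> * norm ?g * norm ?q
      \<le> (norm ?g)\<^sup>2 + \<xi> * (\<delta> * c) - \<xi> * (c\<^sup>2 / (norm ?q)\<^sup>2)"
    by (simp add: left_diff_distrib)
  also have "\<dots> = (norm ?g)\<^sup>2 + \<xi> * ((\<delta> - c / (norm ?q)\<^sup>2) * c)"
    using \<open>0 < norm ?q\<close> by (simp add: power2_eq_square field_simps)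
  also have "\<dots> = ?g \<bullet> (?g + (\<xi> * beta_bar \<delta> gF gG e p) *\<^sub>R fst ?q)"
    unfolding beta_bar_nonzeroD(2)[OF False] c_def by (simp add: inner_add_right dot_square_norm)
  finally show ?thesis .
qed

lemma ebomlc_step_minus:
  "ebomlc_step \<delta> \<xi> gF gG e a p - p =
    (- e *\<^sub>R (fst (gF p) + (\<xi> * beta_bar \<delta> gF gG e p) *\<^sub>R fst (gradQ gG e p)),
     - a *\<^sub>R (snd (gF p) + (\<xi> * beta_bar \<delta> gF gG e p) *\<^sub>R snd (gradQ gG e p)))"
  by (simp add: ebomlc_step_def Let_def prod_eq_iff)

locale ebomlc_bounds =
  fixes gF gG :: "'w::euclidean_space \<times> 'a::euclidean_space \<Rightarrow> 'w \<times> 'a"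
    and L M \<delta> \<xi> :: real
  assumes lipG: "\<And>u v. norm (gG u - gG v) \<le> L * norm (u - v)"
    and norm_gF_le: "\<And>u. norm (gF u) \<le> M"
    and norm_gG_le: "\<And>u. norm (gG u) \<le> M"
    and L_nonneg: "0 \<le> L"
    and delta_nonneg: "0 \<le> \<delta>"
    and xi_nonneg: "0 \<le> \<xi>" and xi_le_one: "\<xi> \<le> 1"
begin

lemma M_nonneg: "0 \<le> M"
  using norm_ge_zero norm_gF_le order_trans by blast

lemma norm_fst_gF_le: "norm (fst (gF p)) \<le> M"
  by (metis norm_gF_le norm_fst_le order_trans prod.collapse)

lemma norm_snd_gF_le: "norm (snd (gF p)) \<le> M"
  by (metis norm_gF_le norm_snd_le order_trans prod.collapse)

lemma norm_gradQ_le: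
  assumes "0 \<le> e"
  shows "norm (gradQ gG e p) \<le> L * e * M"
proof -
  have "p - (fst p - e *\<^sub>R fst (gG p), snd p) = (e *\<^sub>R fst (gG p), 0)"
    by (simp add: prod_eq_iff)
  then have "norm (gradQ gG e p) \<le> L * norm (e *\<^sub>R fst (gG p), 0 :: 'a)"
    using lipG[of p "(fst p - e *\<^sub>R fst (gG p), snd p)"] by (simp add: gradQ_def)
  also have "\<dots> \<le> L * (e * M)"
    using assms L_nonneg norm_gG_le[of p] norm_fst_le[of "fst (gG p)" "snd (gG p)"]
    by (intro mult_left_mono) (simp_all add: norm_Pair mult_left_mono)
  finally show ?thesis
    by (simp add: mult.assoc)
qed

lemma norm_gradQ_le_twice_bound: "norm (gradQ gG e p) \<le> 2 * M"
  unfolding gradQ_def mult_2 by (rule order_trans[OF norm_triangle_ineq4 add_mono[OF norm_gG_le norm_gG_le]])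

lemma norm_correction_le:
  assumes "norm v \<le> norm (gradQ gG e p)"
  shows "norm ((\<xi> * beta_bar \<delta> gF gG e p) *\<^sub>R v) \<le> (2 * \<delta> + 1) * M"
proof -
  let ?b = "beta_bar \<delta> gF gG e p" and ?q = "gradQ gG e p"
  have "norm ((\<xi> * ?b) *\<^sub>R v) = \<xi> * (?b * norm v)"
    using xi_nonneg beta_bar_nonneg[of \<delta> gF gG e p] by simp
  also have "\<dots> \<le> ?b * norm ?q"
    using assms xi_nonneg xi_le_one beta_bar_nonneg[of \<delta> gF gG e p]
    by (meson mult_left_le_one_le mult_left_mono norm_ge_zero order_trans zero_le_mult_iff)
  also have "\<dots> \<le> \<delta> * norm ?q + norm (fst (gF p))"
    by (rule beta_bar_mult_norm_gradQ_le[OF delta_nonneg])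
  also have "\<dots> \<le> \<delta> * (2 * M) + M"
    using norm_gradQ_le_twice_bound delta_nonneg norm_fst_gF_le by (intro add_mono mult_left_mono)
  finally show ?thesis by (simp add: algebra_simps)
qed

lemma norm_direction_le:
  "norm (fst (gF p) + (\<xi> * beta_bar \<delta> gF gG e p) *\<^sub>R fst (gradQ gG e p)) \<le> 2 * (1 + \<delta>) * M"
  "norm (snd (gF p) + (\<xi> * beta_bar \<delta> gF gG e p) *\<^sub>R snd (gradQ gG e p)) \<le> 2 * (1 + \<delta>) * M"
proof -
  have "norm (fst (gradQ gG e p)) \<le> norm (gradQ gG e p)" "norm (snd (gradQ gG e p)) \<le> norm (gradQ gG e p)"
    by (metis norm_fst_le norm_snd_le prod.collapse)+
  note correction = this[THEN norm_correction_le]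
  show "norm (fst (gF p) + (\<xi> * beta_bar \<delta> gF gG e p) *\<^sub>R fst (gradQ gG e p)) \<le> 2 * (1 + \<delta>) * M"
    by (rule norm_triangle_le, rule order_trans[OF add_mono[OF norm_fst_gF_le correction(1)]])
      (simp add: algebra_simps)
  show "norm (snd (gF p) + (\<xi> * beta_bar \<delta> gF gG e p) *\<^sub>R snd (gradQ gG e p)) \<le> 2 * (1 + \<delta>) * M"
    by (rule norm_triangle_le, rule order_trans[OF add_mono[OF norm_snd_gF_le correction(2)]])
      (simp add: algebra_simps)
qed

lemma norm_ebomlc_step_minus_le:
  assumes "0 \<le> a" "a \<le> e"
  shows "norm (ebomlc_step \<delta> \<xi> gF gG e a p - p) \<le> 4 * (1 + \<delta>) * M * e"
proof -
  let ?B = "2 * (1 + \<delta>) * M"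
  have "norm (ebomlc_step \<delta> \<xi> gF gG e a p - p)
      \<le> e * norm (fst (gF p) + (\<xi> * beta_bar \<delta> gF gG e p) *\<^sub>R fst (gradQ gG e p))
        + a * norm (snd (gF p) + (\<xi> * beta_bar \<delta> gF gG e p) *\<^sub>R snd (gradQ gG e p))"
    unfolding ebomlc_step_minus by (rule order_trans[OF norm_Pair_le]) (use assms in simp)
  also have "\<dots> \<le> e * ?B + a * ?B"
    using assms by (intro add_mono mult_left_mono norm_direction_le) auto
  also have "\<dots> \<le> e * ?B + e * ?B"
    using assms delta_nonneg M_nonneg by (intro add_left_mono mult_right_mono) auto
  finally show ?thesis
    by (simp add: algebra_simps)
qed

lemma inner_gF_ebomlc_step_minus_le:
  assumes "0 \<le> a" "a \<le> e"
  shows "gF p \<bullet> (ebomlc_step \<delta> \<xi> gF gG e a p - p)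
    \<le> - (1 - \<xi>) * e * (norm (fst (gF p)))\<^sup>2 + \<delta> * L * M\<^sup>2 * e\<^sup>2 + 2 * (1 + \<delta>) * M\<^sup>2 * a"
proof -
  let ?g = "fst (gF p)" and ?q = "gradQ gG e p" and ?b = "beta_bar \<delta> gF gG e p"
  define dw where "dw = ?g + (\<xi> * ?b) *\<^sub>R fst ?q"
  define da where "da = snd (gF p) + (\<xi> * ?b) *\<^sub>R snd ?q"
  have "\<delta> * norm ?g * norm ?q \<le> \<delta> * M * (L * e * M)"
    using delta_nonneg M_nonneg norm_fst_gF_le norm_gradQ_le assms
    by (intro mult_mono mult_left_mono) auto
  then have "(1 - \<xi>) * (norm ?g)\<^sup>2 - \<delta> * L * M\<^sup>2 * e \<le> ?g \<bullet> dw"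
    using inner_fst_direction_ge[OF delta_nonneg xi_nonneg xi_le_one, of gF p gG e]
    unfolding dw_def by (simp add: power2_eq_square algebra_simps)
  then have w_part: "- (e * (?g \<bullet> dw)) \<le> - (e * ((1 - \<xi>) * (norm ?g)\<^sup>2 - \<delta> * L * M\<^sup>2 * e))"
    using assms by (simp add: mult_left_mono)
  have "- (snd (gF p) \<bullet> da) \<le> norm (snd (gF p)) * norm da"
    using norm_cauchy_schwarz[of "- snd (gF p)" da] by simp
  also have "\<dots> \<le> M * (2 * (1 + \<delta>) * M)"
    unfolding da_def by (intro mult_mono norm_snd_gF_le norm_direction_le) (simp_all add: M_nonneg)
  finally have "a * (- (snd (gF p) \<bullet> da)) \<le> a * (M * (2 * (1 + \<delta>) * M))"
    using assms by (intro mult_left_mono) auto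
  moreover have "gF p \<bullet> (ebomlc_step \<delta> \<xi> gF gG e a p - p) = - (e * (?g \<bullet> dw)) + a * (- (snd (gF p) \<bullet> da))"
    unfolding ebomlc_step_minus dw_def da_def by (simp add: inner_prod_def)
  moreover have "- (1 - \<xi>) * e * (norm ?g)\<^sup>2 + \<delta> * L * M\<^sup>2 * e\<^sup>2 + 2 * (1 + \<delta>) * M\<^sup>2 * a
      = - (e * ((1 - \<xi>) * (norm ?g)\<^sup>2 - \<delta> * L * M\<^sup>2 * e)) + a * (M * (2 * (1 + \<delta>) * M))"
    by (simp add: power2_eq_square algebra_simps)
  ultimately show ?thesis
    using w_part by linarith
qed

lemma ebomlc_step_estimates:
  fixes F :: "'w \<times> 'a \<Rightarrow> real"
  assumes gradF: "has_gradient_everywhere F gF"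
    and lipF: "\<And>u v. norm (gF u - gF v) \<le> L * norm (u - v)"
  obtains C where "0 \<le> C"
    and "\<And>e a p. 0 \<le> a \<Longrightarrow> a \<le> e \<Longrightarrow>
      F (ebomlc_step \<delta> \<xi> gF gG e a p) \<le> F p - (1 - \<xi>) * e * (norm (fst (gF p)))\<^sup>2 + C * (e\<^sup>2 + a)"
    and "\<And>e a p. 0 \<le> a \<Longrightarrow> a \<le> e \<Longrightarrow>
      \<bar>norm (fst (gF (ebomlc_step \<delta> \<xi> gF gG e a p))) - norm (fst (gF p))\<bar> \<le> C * e"
proof -
  define K where "K = 4 * (1 + \<delta>) * M"
  define C where "C = L * K + \<delta> * L * M\<^sup>2 + L * K\<^sup>2 + 2 * (1 + \<delta>) * M\<^sup>2"
  have "0 \<le> K" using delta_nonneg M_nonneg by (simp add: K_def)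
  have C_ge: "L * K \<le> C" "\<delta> * L * M\<^sup>2 + L * K\<^sup>2 \<le> C" "2 * (1 + \<delta>) * M\<^sup>2 \<le> C"
    using \<open>0 \<le> K\<close> L_nonneg delta_nonneg by (simp_all add: C_def)
  show ?thesis
  proof (rule that)
    show "0 \<le> C"
      using C_ge(1) \<open>0 \<le> K\<close> L_nonneg by (meson mult_nonneg_nonneg order_trans)
  next
    fix e a :: real and p
    assume a: "0 \<le> a" "a \<le> e"
    let ?p' = "ebomlc_step \<delta> \<xi> gF gG e a p"
    have step: "norm (?p' - p) \<le> K * e"
      using norm_ebomlc_step_minus_le[OF a] by (simp add: K_def)
    have "F ?p' \<le> F p + gF p \<bullet> (?p' - p) + L * (norm (?p' - p))\<^sup>2"
      using gradF lipF unfolding has_gradient_everywhere_def by (intro descent_lemma) auto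
    moreover have "L * (norm (?p' - p))\<^sup>2 \<le> L * K\<^sup>2 * e\<^sup>2"
    proof -
      have "(norm (?p' - p))\<^sup>2 \<le> (K * e)\<^sup>2"
        using step by (intro power_mono) auto
      from mult_left_mono[OF this L_nonneg] show ?thesis
        by (simp add: power_mult_distrib mult.assoc)
    qed
    moreover note inner_gF_ebomlc_step_minus_le[OF a, of p]
    moreover have "\<delta> * L * M\<^sup>2 * e\<^sup>2 + L * K\<^sup>2 * e\<^sup>2 + 2 * (1 + \<delta>) * M\<^sup>2 * a \<le> C * (e\<^sup>2 + a)"
      using mult_right_mono[OF C_ge(2) zero_le_power2[of e]] mult_right_mono[OF C_ge(3) a(1)]
      by (simp add: algebra_simps)
    ultimately show "F ?p' \<le> F p - (1 - \<xi>) * e * (norm (fst (gF p)))\<^sup>2 + C * (e\<^sup>2 + a)"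
      by linarith
  next
    fix e a :: real and p
    assume a: "0 \<le> a" "a \<le> e"
    let ?p' = "ebomlc_step \<delta> \<xi> gF gG e a p"
    have "\<bar>norm (fst (gF ?p')) - norm (fst (gF p))\<bar> \<le> norm (fst (gF ?p' - gF p))"
      using norm_triangle_ineq3 by simp
    also have "\<dots> \<le> norm (gF ?p' - gF p)"
      by (metis norm_fst_le prod.collapse)
    also have "\<dots> \<le> L * norm (?p' - p)"
      by (rule lipF)
    also have "\<dots> \<le> L * (K * e)"
      using norm_ebomlc_step_minus_le[OF a] L_nonneg by (simp add: K_def mult_left_mono)
    also have "\<dots> \<le> C * e"
      using C_ge(1) a by (simp add: mult.assoc[symmetric] mult_right_mono)
    finally show "\<bar>norm (fst (gF ?p')) - norm (fst (gF p))\<bar> \<le> C * e" .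
  qed
qed

lemma ebomlc_grad_w_LIMSEQ_zero:
  fixes F :: "'w \<times> 'a \<Rightarrow> real" and y :: "nat \<Rightarrow> 'w \<times> 'a" and e a :: "nat \<Rightarrow> real"
  assumes gradF: "has_gradient_everywhere F gF"
    and lipF: "\<And>u v. norm (gF u - gF v) \<le> L * norm (u - v)"
    and F_ge: "\<And>p. B \<le> F p"
    and xi_less_one: "\<xi> < 1"
    and a_nonneg: "\<And>n. 0 \<le> a n" and a_le_e: "\<And>n. a n \<le> e n"
    and summable_a: "summable a" and summable_e2: "summable (\<lambda>n. (e n)\<^sup>2)"
    and not_summable_e: "\<not> summable e"
    and y_Suc: "\<And>n. y (Suc n) = ebomlc_step \<delta> \<xi> gF gG (e n) (a n) (y n)"
  shows "(\<lambda>n. norm (fst (gF (y n)))) \<longlonglongrightarrow> 0"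
proof -
  obtain C where "0 \<le> C"
    and descent: "\<And>n. F (y (Suc n)) \<le> F (y n) - (1 - \<xi>) * e n * (norm (fst (gF (y n))))\<^sup>2 + C * ((e n)\<^sup>2 + a n)"
    and increment: "\<And>n. \<bar>norm (fst (gF (y (Suc n)))) - norm (fst (gF (y n)))\<bar> \<le> C * e n"
    using ebomlc_step_estimates[OF gradF lipF] a_nonneg a_le_e unfolding y_Suc by metis
  have e_nonneg: "0 \<le> e n" for n
    using a_nonneg a_le_e order_trans by blast
  have "summable (\<lambda>n. (1 - \<xi>) * (e n * (norm (fst (gF (y n))))\<^sup>2))"
  proof (rule summable_of_descent)
    show "0 \<le> (1 - \<xi>) * (e n * (norm (fst (gF (y n))))\<^sup>2)" for n
      using xi_less_one e_nonneg by simp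
    show "F (y (Suc n)) \<le> F (y n) - (1 - \<xi>) * (e n * (norm (fst (gF (y n))))\<^sup>2) + C * ((e n)\<^sup>2 + a n)" for n
      using descent[of n] by (simp add: mult.assoc)
    show "0 \<le> C * ((e n)\<^sup>2 + a n)" for n
      using \<open>0 \<le> C\<close> a_nonneg by simp
    show "summable (\<lambda>n. C * ((e n)\<^sup>2 + a n))"
      by (intro summable_mult summable_add summable_e2 summable_a)
    show "B \<le> F (y n)" for n
      by (rule F_ge)
  qed
  with xi_less_one have "summable (\<lambda>n. e n * (norm (fst (gF (y n))))\<^sup>2)"
    by simp
  then show ?thesis
    by (rule LIMSEQ_zero_of_summable_weighted_square[OF e_nonneg not_summable_e summable_e2 _ increment])
qed

end

theorem theorem2:
  fixes F G :: "('w::euclidean_space) \<times> ('a::euclidean_space) \<Rightarrow> real"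
    and gF gG :: "'w \<times> 'a \<Rightarrow> 'w \<times> 'a"
    and L M \<delta> \<xi> :: real
    and eta_w eta_a :: "nat \<Rightarrow> real"
    and x :: "nat \<Rightarrow> 'w \<times> 'a"
  assumes gradF: "has_gradient_everywhere F gF"
    and gradG: "has_gradient_everywhere G gG"
    and L_pos: "L > 0"
    and lipF: "\<forall>u v. norm (gF u - gF v) \<le> L * norm (u - v)"
    and lipG: "\<forall>u v. norm (gG u - gG v) \<le> L * norm (u - v)"
    and bounds: "\<forall>u. \<bar>F u\<bar> \<le> M \<and> \<bar>G u\<bar> \<le> M \<and> norm (gF u) \<le> M \<and> norm (gG u) \<le> M"
    and delta_pos: "\<delta> > 0"
    and xi: "0 < \<xi>" "\<xi> < 1"
    and eta_pos: "\<forall>t\<ge>1. eta_w t > 0 \<and> eta_a t > 0"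
    and sum_a: "summable (\<lambda>t. eta_a (t + 1))"
    and sum_w_div: "filterlim (\<lambda>n. \<Sum>t=1..n. eta_w t) at_top sequentially"
    and sum_w_sq: "summable (\<lambda>t. (eta_w (t + 1))\<^sup>2)"
    and eta_order: "\<forall>t\<ge>1. eta_a t < eta_w t \<and> eta_w t < min ((1 - \<xi>) / L) 1"
    and iter: "\<forall>t\<ge>1. x (Suc t) = ebomlc_step \<delta> \<xi> gF gG (eta_w t) (eta_a t) (x t)"
  shows "(\<lambda>t. norm (fst (gF (x t)))) \<longlonglongrightarrow> 0"
proof -
  interpret ebomlc_bounds gF gG L M \<delta> \<xi>
    using lipG bounds L_pos delta_pos xi by unfold_locales auto
  have "filterlim (\<lambda>n. \<Sum>k<n. eta_w (Suc k)) at_infinity sequentially"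
    using sum_w_div by (simp add: sum.atLeast1_atMost_eq filterlim_at_top_imp_at_infinity)
  then have not_summable: "\<not> summable (\<lambda>n. eta_w (Suc n))"
    unfolding summable_iff_convergent by (rule filterlim_at_infinity_imp_not_convergent)
  have "(\<lambda>n. norm (fst (gF (x (Suc n))))) \<longlonglongrightarrow> 0"
  proof (rule ebomlc_grad_w_LIMSEQ_zero[OF gradF lipF[rule_format], where B = "- M"
        and e = "\<lambda>n. eta_w (Suc n)" and a = "\<lambda>n. eta_a (Suc n)"])
    show "- M \<le> F p" for p
      using bounds[rule_format, of p] by (auto simp: abs_le_iff)
    show "0 \<le> eta_a (Suc n)" "eta_a (Suc n) \<le> eta_w (Suc n)" for n
      using eta_pos[rule_format, of "Suc n"] eta_order[rule_format, of "Suc n"] by simp_all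
    show "x (Suc (Suc n)) = ebomlc_step \<delta> \<xi> gF gG (eta_w (Suc n)) (eta_a (Suc n)) (x (Suc n))" for n
      using iter by simp
  qed (use xi sum_a sum_w_sq not_summable in simp_all)
  then show ?thesis
    by (rule filterlim_sequentially_Suc[THEN iffD1])
qed

end
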